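(* Let $m$ be a positive even integer, and for $z\in\{0,1\}$ let $\mathcal G_z$ be the uniform distribution over $\textsc{GapOr}_m^{-1}(z)$. For every conjunction $C\colon\{0,1\}^m\to\{0,1\}$: (i) $C(\mathcal G_0)\in\{0,1\}$; (ii) if $C(\mathcal G_0)=1$ and $C$ has width $w\le m/4$, then $C(\mathcal G_1)\ge 3^{-w}$.
   Context: $\textsc{GapOr}_m\colon\{0,1\}^m\to\{0,1\}$ is the partial function with value $0$ on the all-zeros input and value $1$ on inputs of Hamming weight $m/2$ (undefined otherwise). A conjunction is an AND of literals; its width is its number of literals. For a conjunction $C$ and distribution $\mathcal D$, $C(\mathcal D)=\Pr_{x\sim\mathcal D}[C(x)=1]$. *)

theory Defs
  imports "HOL-Probability.Probability"
begin

text \<open>Inputs in {0,1}^m are boolean lists of length m (True = 1).\<close>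

definition hamming_weight :: "bool list \<Rightarrow> nat" where
  "hamming_weight x = length (filter id x)"

definition gapor_preimage :: "nat \<Rightarrow> bool \<Rightarrow> bool list set" where
  "gapor_preimage m z =
     (if z then {x. length x = m \<and> hamming_weight x = m div 2}
      else {x. length x = m \<and> hamming_weight x = 0})"

definition G :: "nat \<Rightarrow> bool \<Rightarrow> bool list pmf" where
  "G m z = pmf_of_set (gapor_preimage m z)"

text \<open>A conjunction is a finite set of literals (i, b), meaning x_i = b; its width is the
  number of literals.\<close>
type_synonym conj = "(nat \<times> bool) set"

definition conj_wf :: "nat \<Rightarrow> conj \<Rightarrow> bool" where
  "conj_wf m C \<longleftrightarrow> finite C \<and> (\<forall>(i, b) \<in> C. i < m)"

definition conj_eval :: "conj \<Rightarrow> bool list \<Rightarrow> bool" where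
  "conj_eval C x \<longleftrightarrow> (\<forall>(i, b) \<in> C. x ! i = b)"

definition width :: "conj \<Rightarrow> nat" where
  "width C = card C"

text \<open>C(D) = Pr_{x ~ D}[C(x) = 1].\<close>
definition conj_prob :: "conj \<Rightarrow> bool list pmf \<Rightarrow> real" where
  "conj_prob C D = measure_pmf.prob D {x. conj_eval C x}"

end

theory Submission
  imports Defs
begin

text \<open>Under \<open>G\<^sub>0\<close>, a point mass on the all-zeros input, a conjunction has probability
  0 or 1, and probability 1 means that all its literals are negative. If it has \<open>w\<close> negative
  literals on distinct variables, then under \<open>G\<^sub>1\<close> its probability is
  \<open>binom (m - w) (m/2) / binom m (m/2)\<close>. Removing one variable from a pool of
  \<open>a \<ge> 3m/4\<close> variables shrinks \<open>binom a (m/2)\<close> by the factor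
  \<open>(a - m/2) / a \<ge> 1/3\<close>, which gives the bound \<open>3^-w\<close> for \<open>w \<le> m/4\<close>.\<close>

lemma hamming_weight_map_mem:
  assumes "T \<subseteq> {0..<m}"
  shows "hamming_weight (map (\<lambda>i. i \<in> T) [0..<m]) = card T"
proof -
  have "hamming_weight (map (\<lambda>i. i \<in> T) [0..<m]) = length (filter (\<lambda>i. i \<in> T) [0..<m])"
    by (simp add: hamming_weight_def filter_map o_def)
  also have "\<dots> = card (set (filter (\<lambda>i. i \<in> T) [0..<m]))"
    by (rule distinct_card[symmetric]) simp
  also have "set (filter (\<lambda>i. i \<in> T) [0..<m]) = T"
    using assms by auto
  finally show ?thesis .
qed

lemma card_weight_lists_avoiding:
  assumes "S \<subseteq> {0..<m}"
  shows "card {x. length x = m \<and> hamming_weight x = k \<and> (\<forall>i\<in>S. \<not> x ! i)}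
         = (m - card S) choose k"
proof -
  let ?f = "\<lambda>T. map (\<lambda>i. i \<in> T) [0..<m]"
  let ?U = "{T. T \<subseteq> {0..<m} - S \<and> card T = k}"
  have "inj_on ?f ?U"
  proof (rule inj_onI)
    fix T1 T2 assume "T1 \<in> ?U" "T2 \<in> ?U" "?f T1 = ?f T2"
    then have "i \<in> T1 \<longleftrightarrow> i \<in> T2" for i
      by (cases "i < m") (auto simp: list_eq_iff_nth_eq)
    then show "T1 = T2" by blast
  qed
  moreover have "{x. length x = m \<and> hamming_weight x = k \<and> (\<forall>i\<in>S. \<not> x ! i)} = ?f ` ?U"
  proof (intro equalityI subsetI)
    fix x assume x: "x \<in> {x. length x = m \<and> hamming_weight x = k \<and> (\<forall>i\<in>S. \<not> x ! i)}"
    let ?T = "{i. i < m \<and> x ! i}"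
    have x_eq: "x = ?f ?T"
      using x by (intro nth_equalityI) auto
    have "hamming_weight (?f ?T) = card ?T"
      by (rule hamming_weight_map_mem) auto
    then have "card ?T = k"
      using x x_eq by simp
    moreover have "?T \<subseteq> {0..<m} - S"
      using x by auto
    ultimately show "x \<in> ?f ` ?U"
      using x_eq by blast
  next
    fix x assume "x \<in> ?f ` ?U"
    then show "x \<in> {x. length x = m \<and> hamming_weight x = k \<and> (\<forall>i\<in>S. \<not> x ! i)}"
      using hamming_weight_map_mem assms by (auto simp: subset_iff)
  qed
  moreover have "card ?U = (m - card S) choose k"
    using n_subsets[of "{0..<m} - S" k] assms
    by (simp add: card_Diff_subset finite_subset)
  ultimately show ?thesis
    by (simp add: card_image)
qed

lemma central_binomial_le_pow3_binomial:
  fixes n w :: nat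
  assumes "2 * w \<le> n"
  shows "(2 * n) choose n \<le> 3 ^ w * ((2 * n - w) choose n)"
  using assms
proof (induction w)
  case 0
  then show ?case by simp
next
  case (Suc w)
  let ?a = "2 * n - w"
  have "?a * (?a choose n) \<le> 3 * (?a - n) * (?a choose n)"
    using Suc.prems by (intro mult_right_mono) auto
  also have "\<dots> = ?a * (3 * ((?a - 1) choose n))"
    using binomial_absorb_comp[of ?a n] by simp
  finally have "?a choose n \<le> 3 * ((2 * n - Suc w) choose n)"
    using Suc.prems by (simp add: mult_le_cancel1)
  then show ?case
    using Suc by (simp add: order_trans)
qed

lemma gapor_preimage_False: "gapor_preimage m False = {replicate m False}"
  by (auto simp: gapor_preimage_def hamming_weight_def filter_empty_conv
           intro!: replicate_eqI)

lemma conj_prob_G_False: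
  "conj_prob C (G m False) = (if conj_eval C (replicate m False) then 1 else 0)"
  by (simp add: conj_prob_def G_def gapor_preimage_False pmf_of_set_singleton)

lemma conj_eval_zeros_imp_negative:
  assumes "conj_wf m C" and "conj_eval C (replicate m False)"
  shows "C = (\<lambda>i. (i, False)) ` fst ` C"
proof -
  have "\<not> b" if "(i, b) \<in> C" for i b
    using assms that by (fastforce simp: conj_wf_def conj_eval_def)
  then show ?thesis
    by force
qed

lemma prob_G_True_avoiding:
  assumes "even m" and "S \<subseteq> {0..<m}"
  shows "measure_pmf.prob (G m True) {x. \<forall>i\<in>S. \<not> x ! i}
         = real ((m - card S) choose (m div 2)) / real (m choose (m div 2))"
proof -
  let ?A = "gapor_preimage m True"
  have card_A: "card ?A = m choose (m div 2)"
    using card_weight_lists_avoiding[of "{}" m "m div 2"]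
    by (simp add: gapor_preimage_def)
  then have "finite ?A" "?A \<noteq> {}"
    using card_gt_0_iff by fastforce+
  moreover have "card (?A \<inter> {x. \<forall>i\<in>S. \<not> x ! i}) = (m - card S) choose (m div 2)"
    using card_weight_lists_avoiding[OF assms(2), of "m div 2"]
    by (simp add: gapor_preimage_def Collect_conj_eq Int_assoc)
  ultimately show ?thesis
    by (simp add: G_def measure_pmf_of_set card_A)
qed

theorem fact3p3:
  fixes m :: nat and C :: conj
  assumes "m > 0" and "even m" and "conj_wf m C"
  shows "conj_prob C (G m False) \<in> {0, 1} \<and>
         (conj_prob C (G m False) = 1 \<and> real (width C) \<le> real m / 4 \<longrightarrow>
          conj_prob C (G m True) \<ge> 3 powr (- real (width C)))"
proof (intro conjI impI)
  show "conj_prob C (G m False) \<in> {0, 1}"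
    by (simp add: conj_prob_G_False)
next
  assume hyp: "conj_prob C (G m False) = 1 \<and> real (width C) \<le> real m / 4"
  define S where "S = fst ` C"
  obtain n where n: "m = 2 * n"
    using assms(2) by blast
  have C_eq: "C = (\<lambda>i. (i, False)) ` S"
    using conj_eval_zeros_imp_negative[OF assms(3)] hyp S_def
    by (simp add: conj_prob_G_False split: if_splits)
  have width_C: "width C = card S"
    by (simp add: width_def C_eq card_image inj_on_def)
  have S_sub: "S \<subseteq> {0..<m}"
    using assms(3) by (force simp: S_def conj_wf_def)
  have prob: "conj_prob C (G m True) = real ((m - card S) choose n) / real (m choose n)"
    using prob_G_True_avoiding[OF assms(2) S_sub]
    by (simp add: conj_prob_def conj_eval_def C_eq n)
  have "m choose n \<le> 3 ^ card S * ((m - card S) choose n)"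
    using central_binomial_le_pow3_binomial[of "card S" n] hyp width_C n by simp
  then have "real (m choose n) \<le> 3 ^ card S * real ((m - card S) choose n)"
    by (metis of_nat_le_iff of_nat_mult of_nat_power of_nat_numeral)
  moreover have "real (m choose n) > 0"
    using n by simp
  ultimately show "conj_prob C (G m True) \<ge> 3 powr (- real (width C))"
    by (simp add: prob width_C powr_minus powr_realpow field_simps)
qed

end
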